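(* Let $\{s_1,\dots,s_n\}\subset\mathbb{S}^{d-1}$ be $\eta$-dense with $\eta\le1/8$, and let $A\in\mathbb{R}^{n\times d}$ have rows $a_1,\dots,a_n$ with $\|a_i-s_i\|\le\eta$ for every $i\in[n]$. For every $b\in[1-\eta,1+\eta]^n$, \[ (1-2\eta)\mathbb{B}_2^d\subseteq\{x\in\mathbb{R}^d:Ax\le b\}\subseteq(1+4\eta)\mathbb{B}_2^d. \]
   Context: A set $S\subset\mathbb{S}^{d-1}$ is $\eta$-dense if for every $x\in\mathbb{S}^{d-1}$ there is $s\in S$ with $\|x-s\|\le\eta$. $\mathbb{B}_2^d$ is the closed Euclidean unit ball. *)

theory Defs
  imports "HOL-Analysis.Analysis"
begin

definition eta_dense :: "real \<Rightarrow> ('a::real_normed_vector) set \<Rightarrow> bool" where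
  "eta_dense \<eta> S \<longleftrightarrow> S \<subseteq> sphere 0 1 \<and>
     (\<forall>x \<in> sphere 0 1. \<exists>s \<in> S. norm (x - s) \<le> \<eta>)"

end

theory Submission
  imports Defs
begin

text \<open>Rows of norm at most \<open>1 + \<eta>\<close> and right-hand sides at least \<open>1 - \<eta>\<close> make every
constraint hold on the ball of radius \<open>1 - 2\<eta>\<close>, by Cauchy-Schwarz. Conversely, a point
\<open>x = r u\<close> with \<open>u\<close> a unit vector lies within \<open>\<eta>\<close> of some \<open>s\<^sub>i\<close>, hence within \<open>2\<eta>\<close> of \<open>a\<^sub>i\<close>,
so \<open>a\<^sub>i \<bullet> u \<ge> 1 - 2\<eta>\<close>; the \<open>i\<close>-th constraint then forces \<open>r \<le> (1 + \<eta>) / (1 - 2\<eta>)\<close>,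
which is at most \<open>1 + 4\<eta>\<close> when \<open>\<eta> \<le> 1/8\<close>.\<close>

lemma eta_dense_nonneg:
  fixes S :: "'a::euclidean_space set"
  assumes "eta_dense \<eta> S"
  shows "0 \<le> \<eta>"
proof -
  obtain v :: 'a where "norm v = 1"
    using vector_choose_size[of 1] by auto
  then obtain s where "norm (v - s) \<le> \<eta>"
    using assms unfolding eta_dense_def by fastforce
  then show ?thesis
    using norm_ge_zero order_trans by blast
qed

lemma cball_subset_polyhedron:
  fixes a :: "nat \<Rightarrow> 'a::real_inner"
  assumes "\<forall>i<n. norm (a i) * r \<le> b i"
  shows "cball 0 r \<subseteq> {x. \<forall>i<n. a i \<bullet> x \<le> b i}"
proof safe
  fix x :: 'a and i assume "x \<in> cball 0 r" and "i < n"
  then have "norm x \<le> r" by simp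
  have "a i \<bullet> x \<le> norm (a i) * norm x" by (rule norm_cauchy_schwarz)
  also have "\<dots> \<le> norm (a i) * r" using \<open>norm x \<le> r\<close> by (simp add: mult_left_mono)
  finally show "a i \<bullet> x \<le> b i" using assms \<open>i < n\<close> by fastforce
qed

lemma inner_unit_ge_one_minus_dist:
  fixes u v :: "'a::real_inner"
  assumes "norm u = 1"
  shows "1 - norm (v - u) \<le> v \<bullet> u"
proof -
  have "- ((v - u) \<bullet> u) \<le> norm (v - u)"
    using norm_cauchy_schwarz[of "u - v" u] assms by (simp add: norm_minus_commute inner_diff_left)
  moreover have "v \<bullet> u = u \<bullet> u + (v - u) \<bullet> u" by (simp add: inner_diff_left)
  moreover have "u \<bullet> u = 1" using assms by (simp add: dot_square_norm)
  ultimately show ?thesis by linarith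
qed

lemma eta_dense_perturbed_rows_cover:
  fixes s a :: "nat \<Rightarrow> 'a::real_inner"
  assumes dense: "eta_dense \<eta> (s ` {..<n})"
    and rows: "\<forall>i<n. norm (a i - s i) \<le> \<eta>"
    and "norm u = 1"
  shows "\<exists>i<n. 1 - 2*\<eta> \<le> a i \<bullet> u"
proof -
  obtain i where "i < n" and "norm (u - s i) \<le> \<eta>"
    using dense \<open>norm u = 1\<close> unfolding eta_dense_def by fastforce
  moreover have "norm (a i - s i) \<le> \<eta>" using rows \<open>i < n\<close> by blast
  moreover have "norm (a i - u) \<le> norm (a i - s i) + norm (s i - u)"
    using norm_triangle_ineq[of "a i - s i" "s i - u"] by simp
  ultimately have "norm (a i - u) \<le> 2*\<eta>" by (simp add: norm_minus_commute)
  then have "1 - 2*\<eta> \<le> a i \<bullet> u"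
    using inner_unit_ge_one_minus_dist[OF \<open>norm u = 1\<close>, of "a i"] by linarith
  then show ?thesis using \<open>i < n\<close> by blast
qed

lemma polyhedron_subset_cball:
  fixes a :: "nat \<Rightarrow> 'a::real_inner"
  assumes cover: "\<And>u. norm u = 1 \<Longrightarrow> \<exists>i<n. c \<le> a i \<bullet> u \<and> b i \<le> \<beta>"
    and "0 < c" and "0 \<le> \<beta>"
  shows "{x. \<forall>i<n. a i \<bullet> x \<le> b i} \<subseteq> cball 0 (\<beta> / c)"
proof
  fix x assume x: "x \<in> {x. \<forall>i<n. a i \<bullet> x \<le> b i}"
  show "x \<in> cball 0 (\<beta> / c)"
  proof (cases "x = 0")
    case True
    then show ?thesis using assms by simp
  next
    case False
    define u where "u = x /\<^sub>R norm x"
    have "norm u = 1" using False by (simp add: u_def)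
    then obtain i where "i < n" and "c \<le> a i \<bullet> u" and "b i \<le> \<beta>"
      using cover by blast
    have "norm x * c \<le> norm x * (a i \<bullet> u)"
      using \<open>c \<le> a i \<bullet> u\<close> by (simp add: mult_left_mono)
    also have "\<dots> = a i \<bullet> x" using False by (simp add: u_def)
    also have "\<dots> \<le> \<beta>" using x \<open>i < n\<close> \<open>b i \<le> \<beta>\<close> by fastforce
    finally show ?thesis using \<open>0 < c\<close> by (simp add: pos_le_divide_eq)
  qed
qed

theorem lemma5p3:
  fixes n :: nat and \<eta> :: real
    and s :: "nat \<Rightarrow> real ^ 'd" and a :: "nat \<Rightarrow> real ^ 'd"
    and b :: "nat \<Rightarrow> real"
  assumes dense: "eta_dense \<eta> (s ` {..<n})"
    and eta: "\<eta> \<le> 1/8"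
    and rows: "\<forall>i<n. norm (a i - s i) \<le> \<eta>"
    and b: "\<forall>i<n. 1 - \<eta> \<le> b i \<and> b i \<le> 1 + \<eta>"
  shows "cball 0 (1 - 2*\<eta>) \<subseteq> {x. \<forall>i<n. a i \<bullet> x \<le> b i}
       \<and> {x. \<forall>i<n. a i \<bullet> x \<le> b i} \<subseteq> cball 0 (1 + 4*\<eta>)"
proof
  have "0 \<le> \<eta>" using dense by (rule eta_dense_nonneg)
  have "0 < 1 - 2*\<eta>" using eta by simp
  have "norm (a i) * (1 - 2*\<eta>) \<le> b i" if "i < n" for i
  proof -
    have "norm (s i) = 1" using dense that unfolding eta_dense_def by auto
    then have "norm (a i) \<le> 1 + \<eta>"
      using norm_triangle_ineq[of "a i - s i" "s i"] rows that by fastforce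
    then have "norm (a i) * (1 - 2*\<eta>) \<le> (1 + \<eta>) * (1 - 2*\<eta>)"
      using \<open>0 < 1 - 2*\<eta>\<close> by (simp add: mult_right_mono)
    also have "\<dots> \<le> 1 - \<eta>" by (simp add: algebra_simps)
    finally show ?thesis using b that by fastforce
  qed
  then show "cball 0 (1 - 2*\<eta>) \<subseteq> {x. \<forall>i<n. a i \<bullet> x \<le> b i}"
    by (intro cball_subset_polyhedron) blast
  have "{x. \<forall>i<n. a i \<bullet> x \<le> b i} \<subseteq> cball 0 ((1 + \<eta>) / (1 - 2*\<eta>))"
    using eta_dense_perturbed_rows_cover[OF dense rows] b \<open>0 < 1 - 2*\<eta>\<close> \<open>0 \<le> \<eta>\<close>
    by (intro polyhedron_subset_cball) fastforce+
  moreover have "(1 + \<eta>) / (1 - 2*\<eta>) \<le> 1 + 4*\<eta>"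
  proof -
    have "0 \<le> \<eta> * (1 - 8*\<eta>)" using eta \<open>0 \<le> \<eta>\<close> by simp
    then have "1 + \<eta> \<le> (1 + 4*\<eta>) * (1 - 2*\<eta>)" by (simp add: algebra_simps)
    then show ?thesis using \<open>0 < 1 - 2*\<eta>\<close> by (simp add: pos_divide_le_eq)
  qed
  ultimately show "{x. \<forall>i<n. a i \<bullet> x \<le> b i} \<subseteq> cball 0 (1 + 4*\<eta>)"
    using subset_cball by blast
qed

end
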